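(* For every natural number $n\geq 2$, the Alexandroff $n$-plicate $D_n(2^{\mathbb{N}})$ is a Rosenthal compactum which is premetric of degree at most $n$ but is not premetric of degree at most $n-1$.
   Context: A Rosenthal compactum is a topological space homeomorphic to a compact subset of $\mathcal{B}_1(\mathbb{N}^{\mathbb{N}})$, the space of first Baire class real functions on $\mathbb{N}^{\mathbb{N}}$ with the pointwise topology. A compact space $K$ is premetric of degree at most $m$ if there is a continuous surjection $f:K\to M$ onto a metrizable compact space $M$ with $|f^{-1}(x)|\leq m$ for all $x\in M$. For $n\geq 2$ and a Hausdorff space $X$, the Alexandroff $n$-plicate $D_n(X)$ is the set $X\times\{0,\ldots,n-1\}$ with the topology in which the points $(x,i)$ with $i\in\{1,\ldots,n-1\}$ are isolated and a point $(x,0)$ has basic neighbourhoods $\mathscr{U}\times\{0,\ldots,n-1\}\setminus\{(x,i):1\leq i\leq n-1\}$, where $\mathscr{U}$ ranges over neighbourhoods of $x$ in $X$. $2^{\mathbb{N}}$ is the Cantor space. *)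

theory Defs
  imports "HOL-Analysis.Analysis"
begin

definition baire_space :: "(nat \<Rightarrow> nat) topology" where
  "baire_space = product_topology (\<lambda>_::nat. discrete_topology (UNIV::nat set)) UNIV"

definition cantor_space :: "(nat \<Rightarrow> bool) topology" where
  "cantor_space = product_topology (\<lambda>_::nat. discrete_topology (UNIV::bool set)) UNIV"

definition baire_one :: "((nat \<Rightarrow> nat) \<Rightarrow> real) set" where
  "baire_one = {f. \<exists>g :: nat \<Rightarrow> (nat \<Rightarrow> nat) \<Rightarrow> real.
       (\<forall>k. continuous_map baire_space euclideanreal (g k)) \<and>
       (\<forall>x \<in> topspace baire_space. (\<lambda>k. g k x) \<longlonglongrightarrow> f x)}"

definition pointwise_top :: "((nat \<Rightarrow> nat) \<Rightarrow> real) topology" where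
  "pointwise_top = product_topology (\<lambda>_::nat \<Rightarrow> nat. euclideanreal) UNIV"

definition rosenthal_compactum :: "'a topology \<Rightarrow> bool" where
  "rosenthal_compactum X \<longleftrightarrow>
     (\<exists>K. K \<subseteq> baire_one \<and> compactin pointwise_top K \<and>
          X homeomorphic_space subtopology pointwise_top K)"

text \<open>Premetric of degree at most m, with the metrizable compact image M living
  on a type 'b (given by the itself parameter).\<close>
definition premetric_le :: "'a topology \<Rightarrow> nat \<Rightarrow> 'b itself \<Rightarrow> bool" where
  "premetric_le X m (_ :: 'b itself) \<longleftrightarrow>
     (\<exists>(M :: 'b topology) f. compact_space M \<and> metrizable_space M \<and>
        continuous_map X M f \<and> f ` topspace X = topspace M \<and>
        (\<forall>y \<in> topspace M. finite {x \<in> topspace X. f x = y} \<and>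
                            card {x \<in> topspace X. f x = y} \<le> m))"

definition alex_open :: "'a topology \<Rightarrow> nat \<Rightarrow> ('a \<times> nat) set \<Rightarrow> bool" where
  "alex_open X n U \<longleftrightarrow> U \<subseteq> topspace X \<times> {..<n} \<and>
     (\<forall>x. (x, 0) \<in> U \<longrightarrow>
        (\<exists>V. openin X V \<and> x \<in> V \<and> (V \<times> {..<n}) - ({x} \<times> {1..<n}) \<subseteq> U))"

lemma istopology_alex_open: "istopology (alex_open X n)"
  unfolding istopology_def
proof (intro conjI allI impI)
  fix S T assume S: "alex_open X n S" and T: "alex_open X n T"
  show "alex_open X n (S \<inter> T)"
    unfolding alex_open_def
  proof (intro conjI allI impI)
    show "S \<inter> T \<subseteq> topspace X \<times> {..<n}" using S unfolding alex_open_def by auto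
  next
    fix x assume "(x, 0) \<in> S \<inter> T"
    then obtain V W where "openin X V" "x \<in> V" "(V \<times> {..<n}) - ({x} \<times> {1..<n}) \<subseteq> S"
      "openin X W" "x \<in> W" "(W \<times> {..<n}) - ({x} \<times> {1..<n}) \<subseteq> T"
      using S T unfolding alex_open_def by blast
    then show "\<exists>V. openin X V \<and> x \<in> V \<and> V \<times> {..<n} - {x} \<times> {1..<n} \<subseteq> S \<inter> T"
      by (intro exI[of _ "V \<inter> W"]) auto
  qed
next
  fix K assume K: "\<forall>U\<in>K. alex_open X n U"
  show "alex_open X n (\<Union>K)"
    unfolding alex_open_def
  proof (intro conjI allI impI)
    show "\<Union>K \<subseteq> topspace X \<times> {..<n}" using K unfolding alex_open_def by (meson Sup_least)
  next
    fix x assume "(x, 0) \<in> \<Union>K"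
    then obtain U where U: "U \<in> K" "(x,0) \<in> U" by blast
    then obtain V where "openin X V" "x \<in> V" "V \<times> {..<n} - {x} \<times> {1..<n} \<subseteq> U"
      using K unfolding alex_open_def by meson
    then show "\<exists>V. openin X V \<and> x \<in> V \<and> V \<times> {..<n} - {x} \<times> {1..<n} \<subseteq> \<Union>K"
      using U by blast
  qed
qed

definition alexandroff_duplicate :: "nat \<Rightarrow> 'a topology \<Rightarrow> ('a \<times> nat) topology" where
  "alexandroff_duplicate n X = topology (alex_open X n)"

lemma openin_alexandroff_duplicate:
  "openin (alexandroff_duplicate n X) U \<longleftrightarrow> alex_open X n U"
  unfolding alexandroff_duplicate_def by (simp add: istopology_alex_open)

end

theory Submission
  imports Defs
begin

text \<open>Sending \<open>(x, i)\<close> to the function \<open>y \<mapsto> x(y 0) + i \<cdot> [y = x]\<close> (with \<open>x\<close> read as a point of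
  \<open>\<nat>\<^sup>\<nat>\<close>) embeds \<open>D\<^sub>n(2\<^sup>\<nat>)\<close> into the first Baire class, since a spike at one point is
  Baire class one. The first projection onto \<open>2\<^sup>\<nat>\<close> has fibres of size \<open>n\<close>. Conversely, if a
  continuous map into a metric space has fibres of size \<open>< n\<close>, then for every \<open>x\<close> some
  \<open>(x, i)\<close> with \<open>i \<ge> 1\<close> has image at positive distance from that of \<open>(x, 0)\<close>. But a
  neighbourhood of \<open>(x, 0)\<close> contains the full columns over nearby points, so by compactness
  only finitely many \<open>x\<close> have this distance \<open>\<ge> 1/k\<close>; hence only countably many \<open>x\<close>
  qualify, contradicting the uncountability of \<open>2\<^sup>\<nat>\<close>.\<close>

lemma topspace_alexandroff_duplicate:
  "topspace (alexandroff_duplicate n X) = topspace X \<times> {..<n}"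
proof
  show "topspace (alexandroff_duplicate n X) \<subseteq> topspace X \<times> {..<n}"
    unfolding topspace_def openin_alexandroff_duplicate alex_open_def by blast
  have "alex_open X n (topspace X \<times> {..<n})"
    unfolding alex_open_def by (auto intro!: exI[of _ "topspace X"])
  then show "topspace X \<times> {..<n} \<subseteq> topspace (alexandroff_duplicate n X)"
    by (metis openin_alexandroff_duplicate openin_subset)
qed

lemma continuous_map_fst_alexandroff_duplicate:
  "continuous_map (alexandroff_duplicate n X) X fst"
  unfolding continuous_map_def
proof (intro conjI allI impI)
  show "fst \<in> topspace (alexandroff_duplicate n X) \<rightarrow> topspace X"
    by (auto simp: topspace_alexandroff_duplicate)
  fix U assume U: "openin X U"
  have "{p \<in> topspace (alexandroff_duplicate n X). fst p \<in> U} = U \<times> {..<n}"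
    using openin_subset[OF U] by (auto simp: topspace_alexandroff_duplicate)
  moreover have "alex_open X n (U \<times> {..<n})"
    unfolding alex_open_def using openin_subset[OF U] U by blast
  ultimately show "openin (alexandroff_duplicate n X) {p \<in> topspace (alexandroff_duplicate n X). fst p \<in> U}"
    by (simp add: openin_alexandroff_duplicate)
qed

lemma continuous_map_alexandroff_duplicate_column_level:
  assumes "t1_space X"
  shows "continuous_map (alexandroff_duplicate n X) euclideanreal
           (\<lambda>p. if fst p = z then real (snd p) else 0)"
  unfolding continuous_map_def
proof (intro conjI allI impI)
  show "(\<lambda>p. if fst p = z then real (snd p) else 0) \<in> topspace (alexandroff_duplicate n X) \<rightarrow> topspace euclideanreal"
    by simp
  fix U :: "real set"
  let ?S = "{p \<in> topspace (alexandroff_duplicate n X). (if fst p = z then real (snd p) else 0) \<in> U}"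
  have "openin X (topspace X - {z})"
    using assms by (cases "z \<in> topspace X") (simp_all add: openin_diff t1_space_closedin_singleton)
  then have "alex_open X n ?S"
    unfolding alex_open_def
  proof (intro conjI allI impI)
    fix x assume "(x, 0) \<in> ?S"
    then have "0 \<in> U" "x \<in> topspace X"
      by (auto simp: topspace_alexandroff_duplicate split: if_splits)
    with \<open>openin X (topspace X - {z})\<close>
    show "\<exists>V. openin X V \<and> x \<in> V \<and> V \<times> {..<n} - {x} \<times> {1..<n} \<subseteq> ?S"
      by (cases "x = z"; intro exI[of _ "if x = z then topspace X else topspace X - {z}"])
         (auto simp: topspace_alexandroff_duplicate not_less_eq_eq)
  qed (auto simp: topspace_alexandroff_duplicate)
  then show "openin (alexandroff_duplicate n X) ?S"
    by (simp add: openin_alexandroff_duplicate)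
qed

lemma compact_space_alexandroff_duplicate:
  assumes "compact_space X"
  shows "compact_space (alexandroff_duplicate n X)"
  unfolding compact_space_alt
proof (intro allI impI)
  fix \<U> assume "(\<forall>U\<in>\<U>. openin (alexandroff_duplicate n X) U) \<and>
                  topspace (alexandroff_duplicate n X) \<subseteq> \<Union>\<U>"
  then have open_\<U>: "\<And>U. U \<in> \<U> \<Longrightarrow> alex_open X n U" and cover: "topspace X \<times> {..<n} \<subseteq> \<Union>\<U>"
    by (auto simp: openin_alexandroff_duplicate topspace_alexandroff_duplicate)
  have "\<forall>p \<in> topspace X \<times> {..<n}. \<exists>U \<in> \<U>. p \<in> U"
    using cover by blast
  then obtain W where W: "\<And>p. p \<in> topspace X \<times> {..<n} \<Longrightarrow> W p \<in> \<U> \<and> p \<in> W p"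
    by metis
  show "\<exists>\<F>. finite \<F> \<and> \<F> \<subseteq> \<U> \<and> topspace (alexandroff_duplicate n X) \<subseteq> \<Union>\<F>"
  proof (cases "n = 0")
    case True then show ?thesis by (auto simp: topspace_alexandroff_duplicate)
  next
    case False
    then have "0 < n" by simp
    have "\<forall>x \<in> topspace X. \<exists>V. openin X V \<and> x \<in> V \<and> V \<times> {..<n} - {x} \<times> {1..<n} \<subseteq> W (x, 0)"
      using W open_\<U> False unfolding alex_open_def by (metis SigmaI lessThan_iff not_gr0)
    then obtain V where V: "\<And>x. x \<in> topspace X \<Longrightarrow>
        openin X (V x) \<and> x \<in> V x \<and> V x \<times> {..<n} - {x} \<times> {1..<n} \<subseteq> W (x, 0)"
      by metis
    have "\<exists>\<F>. finite \<F> \<and> \<F> \<subseteq> V ` topspace X \<and> topspace X \<subseteq> \<Union>\<F>"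
      using V by (intro compact_space_alt[THEN iffD1, OF assms, rule_format]) auto
    then obtain F where F: "finite F" "F \<subseteq> topspace X" "topspace X \<subseteq> \<Union>(V ` F)"
      by (metis finite_subset_image)
    \<comment> \<open>Over each \<open>x \<in> F\<close>, \<open>W (x, 0)\<close> covers the column above \<open>V x\<close> except the
      finitely many isolated points \<open>(x, i)\<close>, which are covered by the \<open>W (x, i)\<close>.\<close>
    have "topspace X \<times> {..<n} \<subseteq> \<Union>(W ` (F \<times> {..<n}))"
    proof
      fix p assume "p \<in> topspace X \<times> {..<n}"
      then obtain y i where p: "p = (y, i)" "y \<in> topspace X" "i < n" by blast
      then obtain x where x: "x \<in> F" "y \<in> V x" using F by auto
      show "p \<in> \<Union>(W ` (F \<times> {..<n}))"
      proof (cases "y = x \<and> i \<ge> 1")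
        case True
        then show ?thesis using p x W by (intro UnionI[of "W (x, i)"]) auto
      next
        case False
        then have "p \<in> V x \<times> {..<n} - {x} \<times> {1..<n}" using x p by auto
        then have "p \<in> W (x, 0)" using V[of x] x F by blast
        then show ?thesis using x \<open>0 < n\<close> by (intro UnionI[of "W (x, 0)"]) auto
      qed
    qed
    moreover have "W ` (F \<times> {..<n}) \<subseteq> \<U>"
      using F W by auto
    ultimately show ?thesis
      using F by (intro exI[of _ "W ` (F \<times> {..<n})"]) (auto simp: topspace_alexandroff_duplicate)
  qed
qed

context Metric_space
begin

lemma finite_separated_points_alexandroff_duplicate:
  assumes "compact_space X" and f: "continuous_map (alexandroff_duplicate n X) mtopology f"
    and "r > 0"
  shows "finite {x \<in> topspace X. \<exists>i \<in> {1..<n}. r \<le> d (f (x, 0)) (f (x, i))}"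
    (is "finite ?A")
proof (rule ccontr)
  assume "infinite ?A"
  then obtain x where x: "x \<in> X derived_set_of ?A"
    using compact_space_imp_Bolzano_Weierstrass[OF \<open>compact_space X\<close>] by blast
  have in_M: "f (y, i) \<in> M" if "y \<in> topspace X" "i < n" for y i
    using continuous_map_image_subset_topspace[OF f] that
    by (auto simp: topspace_alexandroff_duplicate)
  have "x \<in> topspace X" "0 < n"
    using x derived_set_of_subset_topspace by (fastforce simp: in_derived_set_of)+
  let ?P = "{p \<in> topspace (alexandroff_duplicate n X). f p \<in> mball (f (x, 0)) (r / 2)}"
  have "openin (alexandroff_duplicate n X) ?P"
    by (rule openin_continuous_map_preimage[OF f openin_mball])
  then have "alex_open X n ?P"
    unfolding openin_alexandroff_duplicate .
  moreover have "(x, 0) \<in> ?P"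
    using in_M \<open>x \<in> topspace X\<close> \<open>0 < n\<close> \<open>r > 0\<close> by (simp add: topspace_alexandroff_duplicate)
  ultimately obtain V where V: "openin X V" "x \<in> V" "V \<times> {..<n} - {x} \<times> {1..<n} \<subseteq> ?P"
    unfolding alex_open_def by blast
  then obtain y i where y: "y \<noteq> x" "y \<in> V" "y \<in> topspace X" "i \<in> {1..<n}"
    and far: "r \<le> d (f (y, 0)) (f (y, i))"
    using x unfolding in_derived_set_of by blast
  \<comment> \<open>Away from the centre \<open>x\<close> the neighbourhood \<open>V\<close> contains whole columns, so both
    \<open>(y, 0)\<close> and \<open>(y, i)\<close> are mapped into the ball of radius \<open>r / 2\<close> about \<open>f (x, 0)\<close>.\<close>
  have "(y, 0) \<in> V \<times> {..<n} - {x} \<times> {1..<n}" "(y, i) \<in> V \<times> {..<n} - {x} \<times> {1..<n}"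
    using y \<open>0 < n\<close> by auto
  then have "(y, 0) \<in> ?P" "(y, i) \<in> ?P"
    using V(3) by blast+
  then have "d (f (x, 0)) (f (y, 0)) < r / 2" "d (f (x, 0)) (f (y, i)) < r / 2"
    by auto
  moreover have "d (f (y, 0)) (f (y, i)) \<le> d (f (x, 0)) (f (y, 0)) + d (f (x, 0)) (f (y, i))"
    using in_M y \<open>x \<in> topspace X\<close> \<open>0 < n\<close> by (metis atLeastLessThan_iff commute triangle)
  ultimately show False
    using far by linarith
qed

lemma countable_separated_points_alexandroff_duplicate:
  assumes "compact_space X" and f: "continuous_map (alexandroff_duplicate n X) mtopology f"
  shows "countable {x \<in> topspace X. \<exists>i \<in> {1..<n}. f (x, i) \<noteq> f (x, 0)}"
proof (rule countable_subset)
  let ?A = "\<lambda>k::nat. {x \<in> topspace X. \<exists>i \<in> {1..<n}. 1 / Suc k \<le> d (f (x, 0)) (f (x, i))}"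
  show "{x \<in> topspace X. \<exists>i \<in> {1..<n}. f (x, i) \<noteq> f (x, 0)} \<subseteq> (\<Union>k. ?A k)"
  proof clarify
    fix x i assume x: "x \<in> topspace X" "i \<in> {1..<n}" "f (x, i) \<noteq> f (x, 0)"
    then have "f (x, 0) \<in> M" "f (x, i) \<in> M"
      using continuous_map_image_subset_topspace[OF f]
      by (auto simp: topspace_alexandroff_duplicate)
    then have "0 < d (f (x, 0)) (f (x, i))"
      using x(3) by (metis nonneg order_le_less zero)
    then obtain k where "inverse (real (Suc k)) < d (f (x, 0)) (f (x, i))"
      using reals_Archimedean by blast
    then show "x \<in> (\<Union>k. ?A k)"
      using x by (auto simp: field_simps intro!: exI[of _ k] bexI[of _ i])
  qed
  have "finite (?A k)" for k
    by (rule finite_separated_points_alexandroff_duplicate[OF assms]) simp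
  then show "countable (\<Union>k. ?A k)"
    by (simp add: countable_finite)
qed

end

lemma not_premetric_le_alexandroff_duplicate:
  assumes "compact_space X" "uncountable (topspace X)" "n \<ge> 1"
  shows "\<not> premetric_le (alexandroff_duplicate n X) (n - 1) TYPE('b)"
proof
  let ?D = "alexandroff_duplicate n X"
  assume "premetric_le ?D (n - 1) TYPE('b)"
  then obtain M :: "'b topology" and f where
    "metrizable_space M" and f: "continuous_map ?D M f"
    and fibres: "\<forall>y \<in> topspace M.
       finite {p \<in> topspace ?D. f p = y} \<and> card {p \<in> topspace ?D. f p = y} \<le> n - 1"
    unfolding premetric_le_def by blast
  obtain S d where "Metric_space S d" and M: "M = Metric_space.mtopology S d"
    using \<open>metrizable_space M\<close> unfolding metrizable_space_def by blast
  have "topspace X \<subseteq> {x \<in> topspace X. \<exists>i \<in> {1..<n}. f (x, i) \<noteq> f (x, 0)}"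
  proof (rule subsetI, rule ccontr)
    fix x assume x: "x \<in> topspace X" and "x \<notin> {x \<in> topspace X. \<exists>i \<in> {1..<n}. f (x, i) \<noteq> f (x, 0)}"
    then have "\<forall>i \<in> {1..<n}. f (x, i) = f (x, 0)"
      by blast
    then have "f (x, i) = f (x, 0)" if "i < n" for i
      using that by (cases "i = 0") auto
    then have "{x} \<times> {..<n} \<subseteq> {p \<in> topspace ?D. f p = f (x, 0)}"
      using x by (auto simp: topspace_alexandroff_duplicate)
    moreover have "f (x, 0) \<in> topspace M"
      using continuous_map_image_subset_topspace[OF f] x \<open>n \<ge> 1\<close>
      by (auto simp: topspace_alexandroff_duplicate)
    ultimately have "card ({x} \<times> {..<n}) \<le> n - 1"
      using fibres by (meson card_mono order_trans)
    then show False
      using \<open>n \<ge> 1\<close> by (simp add: card_cartesian_product)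
  qed
  moreover have "countable {x \<in> topspace X. \<exists>i \<in> {1..<n}. f (x, i) \<noteq> f (x, 0)}"
    using Metric_space.countable_separated_points_alexandroff_duplicate
      [OF \<open>Metric_space S d\<close> \<open>compact_space X\<close>] f unfolding M .
  ultimately show False
    using \<open>uncountable (topspace X)\<close> countable_subset by blast
qed

lemma premetric_le_alexandroff_duplicate:
  fixes X :: "'a topology"
  assumes "compact_space X" "metrizable_space X" "n \<ge> 1"
  shows "premetric_le (alexandroff_duplicate n X) n TYPE('a)"
proof -
  have "{p \<in> topspace (alexandroff_duplicate n X). fst p = x} = {x} \<times> {..<n}"
    if "x \<in> topspace X" for x
    using that by (auto simp: topspace_alexandroff_duplicate)
  moreover have "fst ` topspace (alexandroff_duplicate n X) = topspace X"
    using \<open>n \<ge> 1\<close> by (simp add: topspace_alexandroff_duplicate lessThan_empty_iff)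
  ultimately show ?thesis
    unfolding premetric_le_def using assms continuous_map_fst_alexandroff_duplicate
    by (intro exI[of _ X] exI[of _ fst]) (simp add: card_cartesian_product)
qed

lemma premetric_le_prod_type:
  assumes "premetric_le X m TYPE('b)"
  shows "premetric_le X m TYPE('b \<times> 'c)"
proof -
  obtain M :: "'b topology" and f where M: "compact_space M" "metrizable_space M"
    and f: "continuous_map X M f" "f ` topspace X = topspace M"
    and fibres: "\<forall>y \<in> topspace M. finite {x \<in> topspace X. f x = y} \<and> card {x \<in> topspace X. f x = y} \<le> m"
    using assms unfolding premetric_le_def by blast
  fix c :: 'c
  let ?M = "prod_topology M (discrete_topology {c})"
  have "{x \<in> topspace X. (f x, c) = y} = {x \<in> topspace X. f x = fst y}" if "y \<in> topspace ?M" for y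
    using that by auto
  then have "\<forall>y \<in> topspace ?M. finite {x \<in> topspace X. (f x, c) = y} \<and> card {x \<in> topspace X. (f x, c) = y} \<le> m"
    using fibres by auto
  moreover have "compact_space ?M" "metrizable_space ?M"
    using M by (simp_all add: compact_space_prod_topology compact_space_discrete_topology
        metrizable_space_prod_topology)
  moreover have "continuous_map X ?M (\<lambda>x. (f x, c))"
    using f by (simp add: continuous_map_pairwise o_def)
  moreover have "(\<lambda>x. (f x, c)) ` topspace X = topspace ?M"
    using f by auto
  ultimately show ?thesis
    unfolding premetric_le_def by blast
qed

lemma topspace_cantor_space: "topspace cantor_space = UNIV"
  by (simp add: cantor_space_def)

lemma compact_space_cantor_space: "compact_space cantor_space"
  by (simp add: cantor_space_def compact_space_product_topology compact_space_discrete_topology)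

lemma metrizable_space_cantor_space: "metrizable_space cantor_space"
  by (simp add: cantor_space_def metrizable_space_product_topology)

lemma t1_space_cantor_space: "t1_space cantor_space"
  by (simp add: cantor_space_def Hausdorff_space_product_topology Hausdorff_imp_t1_space)

lemma uncountable_UNIV_nat_bool: "uncountable (UNIV :: (nat \<Rightarrow> bool) set)"
proof
  assume "countable (UNIV :: (nat \<Rightarrow> bool) set)"
  then obtain g :: "nat \<Rightarrow> nat \<Rightarrow> bool" where "surj g"
    by (metis uncountable_def UNIV_not_empty)
  then obtain k where "g k = (\<lambda>j. \<not> g j j)"
    by (metis surjD)
  then show False
    by metis
qed

lemma continuous_map_baire_space_finite_dependence:
  fixes f :: "(nat \<Rightarrow> nat) \<Rightarrow> real"
  assumes "\<And>y y'. (\<forall>j<N. y j = y' j) \<Longrightarrow> f y = f y'"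
  shows "continuous_map baire_space euclideanreal f"
  unfolding continuous_map_def
proof (intro conjI allI impI)
  show "f \<in> topspace baire_space \<rightarrow> topspace euclideanreal"
    by simp
  fix U :: "real set"
  show "openin baire_space {y \<in> topspace baire_space. f y \<in> U}"
  proof (subst openin_subopen, intro ballI)
    fix y assume y: "y \<in> {y \<in> topspace baire_space. f y \<in> U}"
    let ?T = "PiE UNIV (\<lambda>j. if j < N then {y j} else UNIV)"
    have "finite {j. (if j < N then {y j} else UNIV) \<noteq> (UNIV :: nat set)}"
      by (rule finite_subset[of _ "{..<N}"]) auto
    then have "openin baire_space ?T"
      unfolding baire_space_def by (subst openin_PiE_gen) auto
    moreover have "?T \<subseteq> {y \<in> topspace baire_space. f y \<in> U}"
    proof
      fix z assume "z \<in> ?T"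
      then have "\<forall>j<N. y j = z j"
        by (auto simp: PiE_iff) (metis singletonD)
      then show "z \<in> {y \<in> topspace baire_space. f y \<in> U}"
        using y assms by (simp add: baire_space_def) metis
    qed
    ultimately show "\<exists>T. openin baire_space T \<and> y \<in> T \<and> T \<subseteq> {y \<in> topspace baire_space. f y \<in> U}"
      by (intro exI[of _ ?T]) auto
  qed
qed

lemma rosenthal_compactumI:
  assumes "compact_space X" and h: "continuous_map X pointwise_top h"
    and "inj_on h (topspace X)" and "h ` topspace X \<subseteq> baire_one"
  shows "rosenthal_compactum X"
  unfolding rosenthal_compactum_def
proof (intro exI conjI)
  let ?K = "h ` topspace X"
  show "compactin pointwise_top ?K"
    using image_compactin[OF \<open>compact_space X\<close>[unfolded compact_space_def] h] .
  have "Hausdorff_space pointwise_top"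
    by (simp add: pointwise_top_def Hausdorff_space_product_topology)
  then have "homeomorphic_map X (subtopology pointwise_top ?K) h"
    using assms continuous_map_into_subtopology[OF h]
    by (intro continuous_imp_homeomorphic_map) (auto simp: Hausdorff_space_subtopology pointwise_top_def)
  then show "X homeomorphic_space subtopology pointwise_top ?K"
    using homeomorphic_map_imp_homeomorphic_space by blast
qed (use assms in auto)

definition cantor_to_baire :: "(nat \<Rightarrow> bool) \<Rightarrow> nat \<Rightarrow> nat" where
  "cantor_to_baire x = (\<lambda>k. of_bool (x k))"

lemma inj_cantor_to_baire: "inj cantor_to_baire"
  by (rule injI) (simp add: cantor_to_baire_def fun_eq_iff of_bool_eq_iff)

lemma cantor_to_baire_le_1: "cantor_to_baire x k \<le> 1"
  by (simp add: cantor_to_baire_def)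

definition duplicate_embedding :: "(nat \<Rightarrow> bool) \<times> nat \<Rightarrow> (nat \<Rightarrow> nat) \<Rightarrow> real" where
  "duplicate_embedding p y =
     of_bool (fst p (y 0)) + (if y = cantor_to_baire (fst p) then real (snd p) else 0)"

lemma duplicate_embedding_in_baire_one: "duplicate_embedding p \<in> baire_one"
proof -
  define g where "g k y = of_bool (fst p (y 0)) +
      (if \<forall>j<k. y j = cantor_to_baire (fst p) j then real (snd p) else 0)" for k y
  have "continuous_map baire_space euclideanreal (g k)" for k
    by (rule continuous_map_baire_space_finite_dependence[of "Suc k"]) (auto simp: g_def)
  moreover have "(\<lambda>k. g k y) \<longlonglongrightarrow> duplicate_embedding p y" for y
  proof (rule tendsto_eventually)
    show "\<forall>\<^sub>F k in sequentially. g k y = duplicate_embedding p y"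
    proof (cases "y = cantor_to_baire (fst p)")
      case True
      then show ?thesis
        by (simp add: g_def duplicate_embedding_def)
    next
      case False
      then obtain j where "y j \<noteq> cantor_to_baire (fst p) j"
        by auto
      then show ?thesis
        using False unfolding eventually_sequentially g_def duplicate_embedding_def
        by (intro exI[of _ "Suc j"]) auto
    qed
  qed
  ultimately show ?thesis
    unfolding baire_one_def by blast
qed

lemma inj_duplicate_embedding: "inj duplicate_embedding"
proof (rule injI)
  fix p q :: "(nat \<Rightarrow> bool) \<times> nat"
  assume eq: "duplicate_embedding p = duplicate_embedding q"
  have "fst p k = fst q k" for k
  proof -
    let ?y = "\<lambda>j::nat. if j = 0 then k else 2"
    have "?y \<noteq> cantor_to_baire x" for x
    proof
      assume "?y = cantor_to_baire x"
      then have "?y 1 = cantor_to_baire x 1"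
        by (rule fun_cong)
      then show False
        using cantor_to_baire_le_1[of x 1] by simp
    qed
    then have "of_bool (fst p k) = (of_bool (fst q k) :: real)"
      using fun_cong[OF eq, of ?y] by (simp add: duplicate_embedding_def)
    then show ?thesis
      by (simp add: of_bool_eq_iff)
  qed
  then have "fst p = fst q"
    by auto
  moreover have "snd p = snd q"
    using fun_cong[OF eq, of "cantor_to_baire (fst p)"] \<open>fst p = fst q\<close>
    by (simp add: duplicate_embedding_def)
  ultimately show "p = q"
    by (simp add: prod_eq_iff)
qed

lemma continuous_map_duplicate_embedding:
  "continuous_map (alexandroff_duplicate n cantor_space) pointwise_top duplicate_embedding"
  unfolding pointwise_top_def continuous_map_componentwise_UNIV
proof
  fix y :: "nat \<Rightarrow> nat"
  have "continuous_map cantor_space (discrete_topology UNIV) (\<lambda>x. x (y 0))"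
    unfolding cantor_space_def by (rule continuous_map_product_projection) simp
  then have "continuous_map cantor_space euclideanreal (\<lambda>x. of_bool (x (y 0)))"
    using continuous_map_compose[of cantor_space "discrete_topology UNIV" _ euclideanreal of_bool]
    by (simp add: o_def)
  then have digit: "continuous_map (alexandroff_duplicate n cantor_space) euclideanreal
      (\<lambda>p. of_bool (fst p (y 0)))"
    using continuous_map_compose[OF continuous_map_fst_alexandroff_duplicate] by (simp add: o_def)
  have spike: "continuous_map (alexandroff_duplicate n cantor_space) euclideanreal
      (\<lambda>p. if y = cantor_to_baire (fst p) then real (snd p) else 0)"
  proof (cases "y \<in> range cantor_to_baire")
    case True
    then obtain z where "y = cantor_to_baire z"
      by blast
    then have "(\<lambda>p. if y = cantor_to_baire (fst p) then real (snd p) else 0)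
             = (\<lambda>p. if fst p = z then real (snd p) else 0)"
      using inj_cantor_to_baire by (auto simp: inj_eq)
    then show ?thesis
      using continuous_map_alexandroff_duplicate_column_level[OF t1_space_cantor_space] by simp
  next
    case False
    then have "(\<lambda>p. if y = cantor_to_baire (fst p) then real (snd p) else 0) = (\<lambda>p. 0)"
      by (auto intro!: ext)
    then show ?thesis
      by simp
  qed
  show "continuous_map (alexandroff_duplicate n cantor_space) euclideanreal (\<lambda>p. duplicate_embedding p y)"
    using continuous_map_add[OF digit spike] by (simp add: duplicate_embedding_def)
qed

theorem mainTheorem8:
  fixes n :: nat
  assumes "n \<ge> 2"
  shows "rosenthal_compactum (alexandroff_duplicate n cantor_space) \<and>
         premetric_le (alexandroff_duplicate n cantor_space) n TYPE((nat \<Rightarrow> bool) \<times> nat) \<and>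
         \<not> premetric_le (alexandroff_duplicate n cantor_space) (n - 1) TYPE('b)"
proof (intro conjI)
  show "rosenthal_compactum (alexandroff_duplicate n cantor_space)"
    using compact_space_alexandroff_duplicate[OF compact_space_cantor_space]
      continuous_map_duplicate_embedding inj_duplicate_embedding duplicate_embedding_in_baire_one
    by (intro rosenthal_compactumI) (auto intro: inj_on_subset)
  show "premetric_le (alexandroff_duplicate n cantor_space) n TYPE((nat \<Rightarrow> bool) \<times> nat)"
    using assms compact_space_cantor_space metrizable_space_cantor_space
    by (intro premetric_le_prod_type premetric_le_alexandroff_duplicate) auto
  show "\<not> premetric_le (alexandroff_duplicate n cantor_space) (n - 1) TYPE('b)"
    using assms compact_space_cantor_space uncountable_UNIV_nat_bool
    by (intro not_premetric_le_alexandroff_duplicate) (auto simp: topspace_cantor_space)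
qed

end
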